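(* Let $I_{100}=(a_0a_1a_2a_3a_4)^{18}\det\big(a_i^{\,j}\big)_{0\le i,j\le 4}\in\mathbb{C}[a_0,\dots,a_4]$ and let $\Gamma\subset\mathbb{P}^4$ be the singular locus of the hypersurface $E=V(I_{100})$, i.e. the common zero locus of $I_{100}$ and all its partial derivatives. Then $\Gamma$ has exactly $30$ irreducible components, all linear subspaces: (i) the $5$ coordinate hyperplanes $V(a_i)$, $i=0,\dots,4$; (ii) the $15$ planes $V(a_i-a_j,\ a_k-a_l)\cong\mathbb{P}^2$, one for each partition of a $4$-element subset of $\{0,\dots,4\}$ into two pairs $\{i,j\},\{k,l\}$; (iii) the $10$ planes $V(a_i-a_j,\ a_k-a_j)\cong\mathbb{P}^2$, one for each $3$-element subset $\{i,j,k\}$ of $\{0,\dots,4\}$. Furthermore, under $\Phi$ each hyperplane $V(a_i)$ is contracted to the point $Q=(1:0:0:0:0)$, all planes of type (ii) are mapped onto the same surface $S_1$, and all planes of type (iii) onto the same surface $S_2$.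
   Context: $\mathbb{P}^4$ has coordinates $(a_0:\dots:a_4)$, a point being regarded as the cubic surface in Sylvester form $\sum_{i=0}^4 a_iz_i^3=0$, $\sum_{i=0}^4 z_i=0$. $\det(a_i^{\,j})$ is the Vandermonde determinant, equal up to sign to $\prod_{i<j}(a_j-a_i)$. With $\sigma_i$ the elementary symmetric polynomials in $a_0,\dots,a_4$, $\Phi:\mathbb{P}^4\dashrightarrow\mathbb{P}(1,2,3,4,5)$ is $(a_0:\dots:a_4)\mapsto(\sigma_4^2-4\sigma_3\sigma_5:\ \sigma_1\sigma_5^3:\ \sigma_4\sigma_5^4:\ \sigma_2\sigma_5^6:\ \sigma_5^8)$. $S_1$ (resp. $S_2$) denotes the closure of the image under $\Phi$ of the Sylvester forms with coefficients $(a,b,b,c,c)$ (resp. $(a,b,b,b,c)$), $(a:b:c)\in\mathbb{P}^2$. *)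

theory Defs
  imports "HOL-Analysis.Analysis"
begin

text \<open>Points of the affine cone C^5 over P^4, coordinates indexed by the numeral type 5
  (elements 0,1,2,3,4).  idx converts an index to the natural number 0..4.\<close>

type_synonym pt = "complex ^ 5"

definition idx :: "5 \<Rightarrow> nat" where
  "idx i = nat (Rep_bit1 i)"

inductive_set polyfun :: "(pt \<Rightarrow> complex) set" where
  pf_const: "(\<lambda>_. c) \<in> polyfun"
| pf_coord: "(\<lambda>x. x $ i) \<in> polyfun"
| pf_add: "f \<in> polyfun \<Longrightarrow> g \<in> polyfun \<Longrightarrow> (\<lambda>x. f x + g x) \<in> polyfun"
| pf_mult: "f \<in> polyfun \<Longrightarrow> g \<in> polyfun \<Longrightarrow> (\<lambda>x. f x * g x) \<in> polyfun"

definition zariski_closed :: "pt set \<Rightarrow> bool" where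
  "zariski_closed S \<longleftrightarrow> (\<exists>F \<subseteq> polyfun. S = {x. \<forall>f\<in>F. f x = 0})"

definition zariski_closure :: "pt set \<Rightarrow> pt set" where
  "zariski_closure S = \<Inter> {T. zariski_closed T \<and> S \<subseteq> T}"

definition irreducible_closed :: "pt set \<Rightarrow> bool" where
  "irreducible_closed S \<longleftrightarrow> S \<noteq> {} \<and> zariski_closed S \<and>
     (\<forall>A B. zariski_closed A \<longrightarrow> zariski_closed B \<longrightarrow> S \<subseteq> A \<union> B \<longrightarrow> S \<subseteq> A \<or> S \<subseteq> B)"

definition irr_components :: "pt set \<Rightarrow> pt set set" where
  "irr_components X = {Z. Z \<subseteq> X \<and> irreducible_closed Z \<and>
      (\<forall>W. irreducible_closed W \<longrightarrow> Z \<subseteq> W \<longrightarrow> W \<subseteq> X \<longrightarrow> W = Z)}"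

definition vandermonde :: "pt \<Rightarrow> complex" where
  "vandermonde a = det (\<chi> i j. (a $ i) ^ idx j)"

definition I100 :: "pt \<Rightarrow> complex" where
  "I100 a = (\<Prod>i\<in>UNIV. a $ i) ^ 18 * vandermonde a"

definition partial :: "5 \<Rightarrow> (pt \<Rightarrow> complex) \<Rightarrow> pt \<Rightarrow> complex" where
  "partial i f a = deriv (\<lambda>t. f (\<chi> k. if k = i then t else a $ k)) (a $ i)"

text \<open>Affine cone over the singular locus Gamma of E = V(I_100).\<close>
definition Gamma :: "pt set" where
  "Gamma = {a. I100 a = 0 \<and> (\<forall>i. partial i I100 a = 0)}"

definition esym :: "nat \<Rightarrow> pt \<Rightarrow> complex" where
  "esym k a = (\<Sum>S \<in> {S :: 5 set. card S = k}. \<Prod>i\<in>S. a $ i)"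

text \<open>The map Phi, as a map C^5 -> C^5 (coordinates of P(1,2,3,4,5)).\<close>
definition Phi :: "pt \<Rightarrow> pt" where
  "Phi a = (\<chi> k. [esym 4 a ^ 2 - 4 * esym 3 a * esym 5 a,
                   esym 1 a * esym 5 a ^ 3,
                   esym 4 a * esym 5 a ^ 4,
                   esym 2 a * esym 5 a ^ 6,
                   esym 5 a ^ 8] ! idx k)"

text \<open>Domain of definition of Phi on P^4 (in the cone): a \<noteq> 0 and Phi a \<noteq> 0.\<close>
definition Phi_dom :: "pt set" where
  "Phi_dom = {a. a \<noteq> 0 \<and> Phi a \<noteq> 0}"

text \<open>Weighted projective space P(1,2,3,4,5): weight of coordinate k is idx k + 1.\<close>
definition wequiv :: "pt \<Rightarrow> pt \<Rightarrow> bool" where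
  "wequiv y z \<longleftrightarrow> y \<noteq> 0 \<and> (\<exists>l::complex. l \<noteq> 0 \<and> z = (\<chi> k. l ^ (idx k + 1) * y $ k))"

text \<open>Weighted cone over a set of representatives (a subset of P(1,2,3,4,5)).\<close>
definition wcone :: "pt set \<Rightarrow> pt set" where
  "wcone T = {z. \<exists>y\<in>T. wequiv y z}"

definition Qpt :: pt where
  "Qpt = (\<chi> k. if idx k = 0 then 1 else 0)"

text \<open>Sylvester forms with coefficients (a,b,b,c,c) and (a,b,b,b,c).\<close>
definition coeffs :: "complex list \<Rightarrow> pt" where
  "coeffs l = (\<chi> k. l ! idx k)"

text \<open>S_1, S_2 as affine (weighted) cones in C^5 over the closures in P(1,2,3,4,5).\<close>
definition S1 :: "pt set" where
  "S1 = zariski_closure (wcone (Phi ` (Phi_dom \<inter> {coeffs [a, b, b, c, c] | a b c. True})))"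

definition S2 :: "pt set" where
  "S2 = zariski_closure (wcone (Phi ` (Phi_dom \<inter> {coeffs [a, b, b, b, c] | a b c. True})))"

definition hyperplanes :: "pt set set" where
  "hyperplanes = {{a. a $ i = 0} | i. True}"

definition planes2 :: "pt set set" where
  "planes2 = {{a. a $ i = a $ j \<and> a $ k = a $ l} | i j k l. distinct [i, j, k, l]}"

definition planes3 :: "pt set set" where
  "planes3 = {{a. a $ i = a $ j \<and> a $ k = a $ j} | i j k. distinct [i, j, k]}"

end

(*
  Write I100 = P^18 V, where P is the product of the coordinates and V the product of the
  differences a_q - a_p over p < q.  Then every partial derivative is 18 P^17 (dP) V + P^18 dV,
  so the hypersurface P = 0 is singular.  Off it a point is singular iff dV vanishes as well as V,
  i.e. iff at least two factors of V vanish: if exactly one factor a_q - a_p vanishes, the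
  derivative of V with respect to a_q is the product of the remaining factors.  The resulting
  hyperplanes and planes are linear, hence irreducible (a polynomial restricted to a line is a
  univariate polynomial), and no one contains another, as a suitable generic point of each shows.
  Phi only involves elementary symmetric functions, so it is invariant under permutation of
  coordinates, which moves every plane of type (ii) resp. (iii) onto the Sylvester family
  (a,b,b,c,c) resp. (a,b,b,b,c); on a hyperplane sigma_5 = 0 kills all but the first weighted
  coordinate of Phi.
*)

theory Submission
  imports Defs "HOL-Computational_Algebra.Polynomial"
begin

lemma idx_numeral [simp]: "idx 0 = 0" "idx 1 = 1" "idx 2 = 2" "idx 3 = 3" "idx 4 = 4"
  by (simp_all add: idx_def bit1.Rep_numeral bit1.Rep_0 bit1.Rep_1)

lemma UNIV_5: "(UNIV :: 5 set) = {0, 1, 2, 3, 4}"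
proof -
  have "x \<in> {0, 1, 2, 3, 4}" for x :: 5
  proof -
    obtain z where "x = of_int z" "0 \<le> z" "z < 5"
      using bit1.cases[of x] by auto
    then show ?thesis
      by (cases "z = 0 \<or> z = 1 \<or> z = 2 \<or> z = 3 \<or> z = 4") auto
  qed
  then show ?thesis by blast
qed

lemma idx_less_5: "idx i < 5"
  using Rep_bit1[of i] by (simp add: idx_def nat_less_iff)

lemma idx_eq_iff: "idx i = idx j \<longleftrightarrow> i = j"
  using Rep_bit1[of i] Rep_bit1[of j] by (simp add: idx_def Rep_bit1_inject[symmetric]) arith

lemma less_5_iff_idx: "(i :: 5) < j \<longleftrightarrow> idx i < idx j"
  using Rep_bit1[of i] Rep_bit1[of j] by (simp add: idx_def less_bit1_def) arith

lemma all_5: "(\<forall>i :: 5. P i) \<longleftrightarrow> P 0 \<and> P 1 \<and> P 2 \<and> P 3 \<and> P 4"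
  by (metis UNIV_5 UNIV_I empty_iff insert_iff)

lemma vec_5_eq_iff: "(x :: 'a ^ 5) = y \<longleftrightarrow> x$0 = y$0 \<and> x$1 = y$1 \<and> x$2 = y$2 \<and> x$3 = y$3 \<and> x$4 = y$4"
  by (simp add: vec_eq_iff all_5)

definition ordered_pairs :: "(5 \<times> 5) set" where
  "ordered_pairs = {(p, q). p < q}"

lemma ordered_pairs_eq:
  "ordered_pairs = {(0,1),(0,2),(0,3),(0,4),(1,2),(1,3),(1,4),(2,3),(2,4),(3,4)}"
proof -
  have less_iff: "p < q \<longleftrightarrow> (p, q) \<in> {(0,1),(0,2),(0,3),(0,4),(1,2),(1,3),(1,4),(2,3),(2,4),(3,4)}"
    for p q :: 5
    using UNIV_I[of p] UNIV_I[of q] unfolding UNIV_5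
    by (elim insertE emptyE) (simp_all add: less_5_iff_idx)
  show ?thesis
    unfolding ordered_pairs_def set_eq_iff
    by (simp only: split_paired_All mem_Collect_eq case_prod_conv less_iff simp_thms)
qed

section \<open>The singular locus of I100\<close>

lemma vandermonde_eq_prod_ordered_pairs:
  "vandermonde a = (\<Prod>(p, q)\<in>ordered_pairs. a$q - a$p)"
proof -
  have f1: "finite {1::5, 2, 3, 4}" "0 \<notin> {1::5, 2, 3, 4}" by auto
  have f2: "finite {2::5, 3, 4}" "1 \<notin> {2::5, 3, 4}" by auto
  have f3: "finite {3::5, 4}" "2 \<notin> {3::5, 4}" by auto
  have f4: "finite {4::5}" "3 \<notin> {4::5}" by auto
  have "det (\<chi> i j. a$i ^ idx j) =
     (a$1-a$0)*(a$2-a$0)*(a$3-a$0)*(a$4-a$0)*(a$2-a$1)*(a$3-a$1)*(a$4-a$1)*(a$3-a$2)*(a$4-a$2)*(a$4-a$3)"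
    unfolding det_def UNIV_5
    unfolding sum_over_permutations_insert[OF f1] sum_over_permutations_insert[OF f2]
      sum_over_permutations_insert[OF f3] sum_over_permutations_insert[OF f4] permutes_sing
    by (simp add: sign_swap_id permutation_swap_id sign_compose permutation_compose swap_id_eq)
      algebra
  then show ?thesis
    unfolding vandermonde_def ordered_pairs_eq by (simp add: mult_ac)
qed

lemma sum_prod_remove_eq_0_if_two_zeros:
  fixes f :: "'a \<Rightarrow> 'b :: comm_semiring_1"
  assumes "finite A" "x1 \<in> A" "x2 \<in> A" "x1 \<noteq> x2" "f x1 = 0" "f x2 = 0"
  shows "(\<Sum>x\<in>A. c x * (\<Prod>y\<in>A - {x}. f y)) = 0"
proof (rule sum.neutral, rule ballI)
  fix x assume "x \<in> A"
  define z where "z = (if x = x1 then x2 else x1)"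
  have "z \<in> A - {x}" "f z = 0"
    using assms unfolding z_def by auto
  then have "(\<Prod>y\<in>A - {x}. f y) = 0"
    using \<open>finite A\<close> by (intro prod_zero) auto
  then show "c x * (\<Prod>y\<in>A - {x}. f y) = 0"
    by simp
qed

lemma sum_prod_remove_eq_single_zero:
  fixes f :: "'a \<Rightarrow> 'b :: comm_semiring_1"
  assumes "finite A" "x0 \<in> A" "f x0 = 0"
  shows "(\<Sum>x\<in>A. c x * (\<Prod>y\<in>A - {x}. f y)) = c x0 * (\<Prod>y\<in>A - {x0}. f y)"
proof -
  have "(\<Prod>y\<in>A - {x}. f y) = 0" if "x \<in> A - {x0}" for x
    using that assms by (intro prod_zero) auto
  then show ?thesis
    using assms by (simp add: sum.remove)
qed

lemma partial_I100:
  "partial i I100 a =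
     18 * (\<Prod>k\<in>UNIV. a$k) ^ 17 * (\<Prod>k\<in>UNIV - {i}. a$k) * vandermonde a
   + (\<Prod>k\<in>UNIV. a$k) ^ 18 * (\<Sum>pq\<in>ordered_pairs. (of_bool (snd pq = i) - of_bool (fst pq = i))
         * (\<Prod>(p, q)\<in>ordered_pairs - {pq}. a$q - a$p))"
proof -
  let ?vary = "\<lambda>t. \<chi> k. if k = i then t else a$k"
  have coord: "((\<lambda>t. ?vary t $ k) has_field_derivative of_bool (k = i)) (at t)" for k t
    by (cases "k = i") (auto intro!: derivative_eq_intros)
  have vary_at_self: "?vary (a$i) = a"
    by (simp add: vec_eq_iff)
  have "((\<lambda>t. \<Prod>k\<in>UNIV. ?vary t $ k) has_field_derivative
      (\<Sum>x\<in>UNIV. of_bool (x = i) * (\<Prod>y\<in>UNIV - {x}. ?vary (a$i) $ y))) (at (a$i))"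
    by (rule has_field_derivative_prod) (rule coord)
  then have d_prod: "((\<lambda>t. \<Prod>k\<in>UNIV. ?vary t $ k) has_field_derivative
      (\<Prod>k\<in>UNIV - {i}. a$k)) (at (a$i))"
    unfolding vary_at_self by simp
  have "((\<lambda>t. \<Prod>pq\<in>ordered_pairs. ?vary t $ snd pq - ?vary t $ fst pq) has_field_derivative
      (\<Sum>pq\<in>ordered_pairs. (of_bool (snd pq = i) - of_bool (fst pq = i)) *
         (\<Prod>pq'\<in>ordered_pairs - {pq}. ?vary (a$i) $ snd pq' - ?vary (a$i) $ fst pq'))) (at (a$i))"
    by (rule has_field_derivative_prod) (intro derivative_intros coord)
  then have d_vdm: "((\<lambda>t. vandermonde (?vary t)) has_field_derivative
      (\<Sum>pq\<in>ordered_pairs. (of_bool (snd pq = i) - of_bool (fst pq = i)) *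
         (\<Prod>(p, q)\<in>ordered_pairs - {pq}. a$q - a$p))) (at (a$i))"
    unfolding vary_at_self by (simp add: vandermonde_eq_prod_ordered_pairs case_prod_beta)
  have "((\<lambda>t. (\<Prod>k\<in>UNIV. ?vary t $ k) ^ 18 * vandermonde (?vary t)) has_field_derivative
      18 * (\<Prod>k\<in>UNIV. a$k) ^ 17 * (\<Prod>k\<in>UNIV - {i}. a$k) * vandermonde a
      + (\<Prod>k\<in>UNIV. a$k) ^ 18 * (\<Sum>pq\<in>ordered_pairs. (of_bool (snd pq = i) - of_bool (fst pq = i))
         * (\<Prod>(p, q)\<in>ordered_pairs - {pq}. a$q - a$p))) (at (a$i))"
    by (rule derivative_eq_intros d_prod d_vdm refl | simp add: vary_at_self)+
  then show ?thesis
    unfolding partial_def I100_def by (rule DERIV_imp_deriv)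
qed

lemma vandermonde_eq_0_iff:
  "vandermonde a = 0 \<longleftrightarrow> (\<exists>(p, q)\<in>ordered_pairs. a$p = a$q)"
  by (auto simp: vandermonde_eq_prod_ordered_pairs ordered_pairs_eq)

lemma mem_Gamma_iff:
  "a \<in> Gamma \<longleftrightarrow> (\<exists>i. a$i = 0) \<or>
     (\<exists>pq1\<in>ordered_pairs. \<exists>pq2\<in>ordered_pairs. pq1 \<noteq> pq2 \<and> a$fst pq1 = a$snd pq1 \<and> a$fst pq2 = a$snd pq2)"
  (is "_ \<longleftrightarrow> ?zero \<or> ?two")
proof -
  let ?f = "\<lambda>(p, q). a$q - a$p"
  have fin: "finite ordered_pairs"
    by (simp add: ordered_pairs_eq)
  have I100_eq: "I100 a = (\<Prod>k\<in>UNIV. a$k) ^ 18 * vandermonde a"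
    by (simp add: I100_def)
  show ?thesis
  proof
    assume "a \<in> Gamma"
    then have I: "I100 a = 0" and P: "\<And>i. partial i I100 a = 0"
      by (auto simp: Gamma_def)
    show "?zero \<or> ?two"
    proof (rule ccontr)
      assume "\<not> (?zero \<or> ?two)"
      then have nonzero: "(\<Prod>k\<in>UNIV. a$k) \<noteq> 0" and not_two: "\<not> ?two"
        by auto
      then have "vandermonde a = 0"
        using I by (simp add: I100_eq)
      then obtain pq0 where pq0: "pq0 \<in> ordered_pairs" "?f pq0 = 0"
        by (auto simp: vandermonde_eq_0_iff)
      have others: "?f pq \<noteq> 0" if "pq \<in> ordered_pairs - {pq0}" for pq
        using not_two pq0 that by (auto simp: case_prod_beta) metis
      have "fst pq0 \<noteq> snd pq0"
        using pq0(1) by (auto simp: ordered_pairs_def)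
      then have "partial (snd pq0) I100 a = (\<Prod>k\<in>UNIV. a$k) ^ 18 * (\<Prod>pq\<in>ordered_pairs - {pq0}. ?f pq)"
        unfolding partial_I100 using \<open>vandermonde a = 0\<close>
        by (simp add: sum_prod_remove_eq_single_zero[where f = ?f, OF fin pq0])
      also have "\<dots> \<noteq> 0"
        using nonzero others fin by simp
      finally show False
        using P by blast
    qed
  next
    assume "?zero \<or> ?two"
    then show "a \<in> Gamma"
    proof
      assume ?zero
      then have "(\<Prod>k\<in>UNIV. a$k) = 0"
        by simp
      then show ?thesis
        by (simp add: Gamma_def I100_eq partial_I100 del: prod_zero_iff)
    next
      assume ?two
      then obtain pq1 pq2 where pq: "pq1 \<in> ordered_pairs" "pq2 \<in> ordered_pairs" "pq1 \<noteq> pq2"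
          "?f pq1 = 0" "?f pq2 = 0"
        by (metis (no_types, lifting) case_prod_beta right_minus_eq)
      then have "vandermonde a = 0"
        by (auto simp: vandermonde_eq_0_iff case_prod_beta) metis
      moreover have "(\<Sum>pq\<in>ordered_pairs. c pq * (\<Prod>pq'\<in>ordered_pairs - {pq}. ?f pq')) = 0" for c
        using sum_prod_remove_eq_0_if_two_zeros[OF fin pq] .
      ultimately show ?thesis
        by (simp add: Gamma_def I100_eq partial_I100)
    qed
  qed
qed

lemma two_coincidences_iff_mem_planes:
  "(\<exists>pq1\<in>ordered_pairs. \<exists>pq2\<in>ordered_pairs. pq1 \<noteq> pq2 \<and> a$fst pq1 = a$snd pq1 \<and> a$fst pq2 = a$snd pq2)
   \<longleftrightarrow> a \<in> \<Union>(planes2 \<union> planes3)"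
proof
  assume "\<exists>pq1\<in>ordered_pairs. \<exists>pq2\<in>ordered_pairs. pq1 \<noteq> pq2 \<and> a$fst pq1 = a$snd pq1 \<and> a$fst pq2 = a$snd pq2"
  then obtain i j k l where ij: "i < j" "a$i = a$j" and kl: "k < l" "a$k = a$l" and "(i, j) \<noteq> (k, l)"
    by (force simp: ordered_pairs_def)
  then consider "distinct [i, j, k, l]" | "i = k" | "i = l" | "j = k" | "j = l"
    by fastforce
  then show "a \<in> \<Union>(planes2 \<union> planes3)"
  proof cases
    case 1
    then show ?thesis
      using ij kl unfolding planes2_def by blast
  next
    case 2
    then have "a \<in> {a. a$j = a$i \<and> a$l = a$i}" "distinct [j, i, l]"
      using ij kl \<open>(i, j) \<noteq> (k, l)\<close> by auto
    then show ?thesis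
      unfolding planes3_def by blast
  next
    case 3
    then have "a \<in> {a. a$j = a$i \<and> a$k = a$i}" "distinct [j, i, k]"
      using ij kl by auto
    then show ?thesis
      unfolding planes3_def by blast
  next
    case 4
    then have "a \<in> {a. a$i = a$j \<and> a$l = a$j}" "distinct [i, j, l]"
      using ij kl by auto
    then show ?thesis
      unfolding planes3_def by blast
  next
    case 5
    then have "a \<in> {a. a$i = a$j \<and> a$k = a$j}" "distinct [i, j, k]"
      using ij kl \<open>(i, j) \<noteq> (k, l)\<close> by auto
    then show ?thesis
      unfolding planes3_def by blast
  qed
next
  have ordered: "(min x y, max x y) \<in> ordered_pairs" "a$min x y = a$max x y \<longleftrightarrow> a$x = a$y"
    if "x \<noteq> y" for x y :: 5
    using that by (auto simp: ordered_pairs_def min_def max_def)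
  assume "a \<in> \<Union>(planes2 \<union> planes3)"
  then obtain i j k l where "a$i = a$j" "a$k = a$l" "i \<noteq> j" "k \<noteq> l" "{i, j} \<noteq> {k, l}"
    unfolding planes2_def planes3_def by (auto simp: doubleton_eq_iff)
  then show "\<exists>pq1\<in>ordered_pairs. \<exists>pq2\<in>ordered_pairs. pq1 \<noteq> pq2 \<and> a$fst pq1 = a$snd pq1 \<and> a$fst pq2 = a$snd pq2"
    using ordered[of i j] ordered[of k l]
    by (intro bexI[of _ "(min i j, max i j)"] bexI[of _ "(min k l, max k l)"])
      (auto simp: min_def max_def doubleton_eq_iff split: if_splits)
qed

lemma Gamma_eq_Union: "Gamma = \<Union>(hyperplanes \<union> planes2 \<union> planes3)"
  unfolding set_eq_iff mem_Gamma_iff two_coincidences_iff_mem_planes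
  by (auto simp: hyperplanes_def)

section \<open>Irreducible components in the Zariski topology\<close>

definition line :: "pt \<Rightarrow> pt \<Rightarrow> complex \<Rightarrow> pt" where
  "line p q t = (\<chi> k. p$k + t * (q$k - p$k))"

lemma line_nth [simp]: "line p q t $ k = p$k + t * (q$k - p$k)"
  by (simp add: line_def)

lemma polyfun_along_line:
  assumes "f \<in> polyfun"
  obtains P where "\<And>t. f (line p q t) = poly P t"
proof -
  from assms have "\<exists>P. \<forall>t. f (line p q t) = poly P t"
  proof induction
    case (pf_const c)
    show ?case by (rule exI[of _ "[:c:]"]) simp
  next
    case (pf_coord i)
    show ?case by (rule exI[of _ "[:p$i, q$i - p$i:]"]) (simp add: algebra_simps)
  next
    case (pf_add f g)
    then obtain P Q where "\<forall>t. f (line p q t) = poly P t" "\<forall>t. g (line p q t) = poly Q t"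
      by blast
    then show ?case by (intro exI[of _ "P + Q"]) simp
  next
    case (pf_mult f g)
    then obtain P Q where "\<forall>t. f (line p q t) = poly P t" "\<forall>t. g (line p q t) = poly Q t"
      by blast
    then show ?case by (intro exI[of _ "P * Q"]) simp
  qed
  then show ?thesis
    using that by blast
qed

text \<open>If p \<notin> A and q \<notin> B, an equation of A not vanishing at p and one of B not vanishing at q
  restrict to the line through p and q as two nonzero polynomials whose product vanishes.\<close>

lemma irreducible_closed_if_line_closed:
  assumes "L \<noteq> {}" "zariski_closed L"
    and line_closed: "\<And>p q t. p \<in> L \<Longrightarrow> q \<in> L \<Longrightarrow> line p q t \<in> L"
  shows "irreducible_closed L"
  unfolding irreducible_closed_def
proof (intro conjI assms allI impI)
  fix A B
  assume "zariski_closed A" "zariski_closed B" and L_sub: "L \<subseteq> A \<union> B"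
  then obtain FA FB where FA: "FA \<subseteq> polyfun" "A = {x. \<forall>f\<in>FA. f x = 0}"
    and FB: "FB \<subseteq> polyfun" "B = {x. \<forall>f\<in>FB. f x = 0}"
    unfolding zariski_closed_def by blast
  show "L \<subseteq> A \<or> L \<subseteq> B"
  proof (rule ccontr)
    assume "\<not> (L \<subseteq> A \<or> L \<subseteq> B)"
    then obtain p q where "p \<in> L" "p \<notin> A" "q \<in> L" "q \<notin> B"
      by blast
    then obtain f g where f: "f \<in> FA" "f p \<noteq> 0" and g: "g \<in> FB" "g q \<noteq> 0"
      using FA FB by blast
    obtain P where P: "\<And>t. f (line p q t) = poly P t"
      using polyfun_along_line f FA by blast
    obtain Q where Q: "\<And>t. g (line p q t) = poly Q t"
      using polyfun_along_line g FB by blast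
    have "poly (P * Q) t = 0" for t
    proof -
      have "line p q t \<in> A \<union> B"
        using line_closed \<open>p \<in> L\<close> \<open>q \<in> L\<close> L_sub by blast
      then show ?thesis
        using FA FB f g P Q by auto
    qed
    then have "P * Q = 0"
      using poly_all_0_iff_0 by blast
    then have "P = 0 \<or> Q = 0"
      by simp
    moreover have "poly P 0 \<noteq> 0" "poly Q 1 \<noteq> 0"
      using f g P[of 0] Q[of 1] by (simp_all add: line_def vec_eq_iff[symmetric])
    ultimately show False
      by auto
  qed
qed

lemma zariski_closed_empty: "zariski_closed {}"
  unfolding zariski_closed_def by (rule exI[of _ "{\<lambda>_. 1}"]) (auto intro: polyfun.pf_const)

lemma zariski_closed_Un:
  assumes "zariski_closed A" "zariski_closed B"
  shows "zariski_closed (A \<union> B)"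
proof -
  obtain FA FB where FA: "FA \<subseteq> polyfun" "A = {x. \<forall>f\<in>FA. f x = 0}"
    and FB: "FB \<subseteq> polyfun" "B = {x. \<forall>f\<in>FB. f x = 0}"
    using assms unfolding zariski_closed_def by blast
  let ?F = "{(\<lambda>x. f x * g x) | f g. f \<in> FA \<and> g \<in> FB}"
  have "?F \<subseteq> polyfun"
    using FA FB by (auto intro: polyfun.pf_mult)
  moreover have "A \<union> B = {x. \<forall>h\<in>?F. h x = 0}"
  proof (intro set_eqI iffI)
    fix x
    assume x: "x \<in> {x. \<forall>h\<in>?F. h x = 0}"
    have "f x * g x = 0" if "f \<in> FA" "g \<in> FB" for f g
    proof -
      have "(\<lambda>x. f x * g x) \<in> ?F"
        using that by blast
      then show ?thesis
        using x by (metis (mono_tags, lifting) mem_Collect_eq)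
    qed
    then show "x \<in> A \<union> B"
      using FA FB by auto
  qed (use FA FB in auto)
  ultimately show ?thesis
    unfolding zariski_closed_def by blast
qed

lemma zariski_closed_Union:
  "finite C \<Longrightarrow> (\<And>Z. Z \<in> C \<Longrightarrow> zariski_closed Z) \<Longrightarrow> zariski_closed (\<Union>C)"
  by (induction C rule: finite_induct) (auto intro: zariski_closed_Un zariski_closed_empty)

lemma irreducible_closed_subset_Union:
  assumes "finite C" "\<And>Z. Z \<in> C \<Longrightarrow> zariski_closed Z" "irreducible_closed W" "W \<subseteq> \<Union>C"
  shows "\<exists>Z\<in>C. W \<subseteq> Z"
  using assms
proof (induction C rule: finite_induct)
  case empty
  then show ?case by (auto simp: irreducible_closed_def)
next
  case (insert Z C)
  have "zariski_closed (\<Union>C)"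
    using insert by (intro zariski_closed_Union) auto
  then have "W \<subseteq> Z \<or> W \<subseteq> \<Union>C"
    using insert unfolding irreducible_closed_def by auto
  then show ?case
    using insert by blast
qed

lemma irr_components_Union:
  assumes fin: "finite C" and irr: "\<And>Z. Z \<in> C \<Longrightarrow> irreducible_closed Z"
    and antichain: "\<And>Z W. Z \<in> C \<Longrightarrow> W \<in> C \<Longrightarrow> Z \<subseteq> W \<Longrightarrow> Z = W"
  shows "irr_components (\<Union>C) = C"
proof -
  have closed: "\<And>Z. Z \<in> C \<Longrightarrow> zariski_closed Z"
    using irr irreducible_closed_def by blast
  have below: "\<exists>Z\<in>C. W \<subseteq> Z" if "irreducible_closed W" "W \<subseteq> \<Union>C" for W
    using irreducible_closed_subset_Union[OF fin closed that] .
  show ?thesis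
  proof (intro set_eqI iffI)
    fix Z
    assume "Z \<in> irr_components (\<Union>C)"
    then have "Z \<subseteq> \<Union>C" "irreducible_closed Z"
      and maximal: "\<And>W. irreducible_closed W \<Longrightarrow> Z \<subseteq> W \<Longrightarrow> W \<subseteq> \<Union>C \<Longrightarrow> W = Z"
      unfolding irr_components_def by blast+
    then obtain Z' where "Z' \<in> C" "Z \<subseteq> Z'"
      using below by blast
    then show "Z \<in> C"
      using maximal[of Z'] irr by blast
  next
    fix Z
    assume "Z \<in> C"
    have "W = Z" if "irreducible_closed W" "Z \<subseteq> W" "W \<subseteq> \<Union>C" for W
      using below[OF that(1,3)] antichain[OF \<open>Z \<in> C\<close>] that(2) by blast
    then show "Z \<in> irr_components (\<Union>C)"
      unfolding irr_components_def using \<open>Z \<in> C\<close> irr by blast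
  qed
qed

section \<open>The thirty components of Gamma\<close>

definition coord_hyperplane :: "5 \<Rightarrow> pt set" where
  "coord_hyperplane i = {a. a$i = 0}"

definition pair_plane :: "5 \<Rightarrow> 5 \<Rightarrow> 5 \<Rightarrow> 5 \<Rightarrow> pt set" where
  "pair_plane i j k l = {a. a$i = a$j \<and> a$k = a$l}"

definition coincidence_plane :: "5 set \<Rightarrow> pt set" where
  "coincidence_plane S = {a. \<forall>x\<in>S. \<forall>y\<in>S. a$x = a$y}"

lemma hyperplanes_eq_range: "hyperplanes = range coord_hyperplane"
  unfolding hyperplanes_def coord_hyperplane_def by blast

lemma planes2_eq: "planes2 = {pair_plane i j k l | i j k l. distinct [i, j, k, l]}"
  unfolding planes2_def pair_plane_def by blast

lemma coincidence_plane_triple: "coincidence_plane {i, j, k} = {a. a$i = a$j \<and> a$k = a$j}"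
  unfolding coincidence_plane_def by auto

lemma planes3_eq_image: "planes3 = coincidence_plane ` {S. card S = 3}"
proof -
  have "planes3 = {coincidence_plane {i, j, k} | i j k. distinct [i, j, k]}"
    by (simp add: planes3_def coincidence_plane_triple)
  also have "\<dots> = coincidence_plane ` {S. card S = 3}"
    unfolding card_3_iff by auto
  finally show ?thesis .
qed

lemma pair_plane_cong:
  "{{i, j}, {k, l}} = {{i', j'}, {k', l'}} \<Longrightarrow> pair_plane i j k l = pair_plane i' j' k' l'"
  unfolding pair_plane_def by (auto simp: doubleton_eq_iff)

lemma polyfun_coord_diff: "(\<lambda>x. x$i - x$j) \<in> polyfun"
proof -
  have "(\<lambda>x. x$i + (-1) * x$j) \<in> polyfun"
    by (intro polyfun.intros)
  then show ?thesis
    by simp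
qed

lemma irreducible_coord_hyperplane: "irreducible_closed (coord_hyperplane i)"
proof (rule irreducible_closed_if_line_closed)
  show "coord_hyperplane i \<noteq> {}"
    by (auto simp: coord_hyperplane_def intro!: exI[of _ 0])
  show "zariski_closed (coord_hyperplane i)"
    unfolding zariski_closed_def coord_hyperplane_def
    by (rule exI[of _ "{\<lambda>x. x$i}"]) (auto intro: polyfun.pf_coord)
qed (simp add: coord_hyperplane_def)

lemma irreducible_pair_plane: "irreducible_closed (pair_plane i j k l)"
proof (rule irreducible_closed_if_line_closed)
  show "pair_plane i j k l \<noteq> {}"
    by (auto simp: pair_plane_def intro!: exI[of _ 0])
  show "zariski_closed (pair_plane i j k l)"
    unfolding zariski_closed_def pair_plane_def
    by (rule exI[of _ "{\<lambda>x. x$i - x$j, \<lambda>x. x$k - x$l}"]) (auto intro: polyfun_coord_diff)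
qed (simp add: pair_plane_def)

lemma irreducible_coincidence_plane: "irreducible_closed (coincidence_plane S)"
proof (rule irreducible_closed_if_line_closed)
  show "coincidence_plane S \<noteq> {}"
    by (auto simp: coincidence_plane_def intro!: exI[of _ 0])
  let ?F = "{\<lambda>x :: pt. x$u - x$v | u v. u \<in> S \<and> v \<in> S}"
  have "?F \<subseteq> polyfun"
    using polyfun_coord_diff by blast
  moreover have "coincidence_plane S = {a. \<forall>f\<in>?F. f a = 0}"
  proof (intro set_eqI iffI)
    fix a :: pt
    assume a: "a \<in> {a. \<forall>f\<in>?F. f a = 0}"
    have "a$u = a$v" if "u \<in> S" "v \<in> S" for u v
    proof -
      have "(\<lambda>x. x$u - x$v) \<in> ?F"
        using that by blast
      then show ?thesis
        using a by (metis (mono_tags, lifting) mem_Collect_eq right_minus_eq)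
    qed
    then show "a \<in> coincidence_plane S"
      unfolding coincidence_plane_def by blast
  next
    fix a :: pt
    assume a: "a \<in> coincidence_plane S"
    show "a \<in> {a. \<forall>f\<in>?F. f a = 0}"
    proof (intro CollectI ballI)
      fix f
      assume "f \<in> ?F"
      then obtain u v where "f = (\<lambda>x. x$u - x$v)" "u \<in> S" "v \<in> S"
        by blast
      moreover have "a$u = a$v"
        using a \<open>u \<in> S\<close> \<open>v \<in> S\<close> unfolding coincidence_plane_def by blast
      ultimately show "f a = 0"
        by simp
    qed
  qed
  ultimately show "zariski_closed (coincidence_plane S)"
    unfolding zariski_closed_def by blast
  show "line p q t \<in> coincidence_plane S"
    if "p \<in> coincidence_plane S" "q \<in> coincidence_plane S" for p q t
  proof -
    have "line p q t $ x = line p q t $ y" if "x \<in> S" "y \<in> S" for x y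
    proof -
      have "p$x = p$y" "q$x = q$y"
        using \<open>p \<in> coincidence_plane S\<close> \<open>q \<in> coincidence_plane S\<close> that
        unfolding coincidence_plane_def by blast+
      then show ?thesis
        by simp
    qed
    then show ?thesis
      unfolding coincidence_plane_def by blast
  qed
qed

text \<open>Generic points: a point of each component whose coordinates coincide only where the
  component forces them to.  The values 1, ..., 5, 10, 20 are pairwise distinct and nonzero.\<close>

definition generic_value :: "5 \<Rightarrow> complex" where
  "generic_value x = of_nat (idx x) + 1"

definition generic_hyp :: "5 \<Rightarrow> pt" where
  "generic_hyp i = (\<chi> x. if x = i then 0 else generic_value x)"

definition generic_pair :: "5 \<Rightarrow> 5 \<Rightarrow> 5 \<Rightarrow> 5 \<Rightarrow> pt" where
  "generic_pair i j k l =
     (\<chi> x. if x \<in> {i, j} then 10 else if x \<in> {k, l} then 20 else generic_value x)"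

definition generic_coincidence :: "5 set \<Rightarrow> pt" where
  "generic_coincidence S = (\<chi> x. if x \<in> S then 10 else generic_value x)"

lemma generic_value_eq_iff: "generic_value x = generic_value y \<longleftrightarrow> x = y"
  unfolding generic_value_def by (simp add: idx_eq_iff)

lemma generic_value_neq: "generic_value x \<noteq> 0" "generic_value x \<noteq> 10" "generic_value x \<noteq> 20"
proof -
  have "idx x < 5"
    by (rule idx_less_5)
  moreover have "Re (generic_value x) = real (idx x) + 1"
    by (simp add: generic_value_def)
  ultimately show "generic_value x \<noteq> 0" "generic_value x \<noteq> 10" "generic_value x \<noteq> 20"
    by auto
qed

lemma generic_hyp_nth_eq_iff:
  "generic_hyp i $ x = generic_hyp i $ y \<longleftrightarrow> x = y"
  "generic_hyp i $ x = 0 \<longleftrightarrow> x = i"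
  using generic_value_neq generic_value_eq_iff by (auto simp: generic_hyp_def)

lemma generic_pair_nth_eq_iff:
  assumes "distinct [i, j, k, l]"
  shows "generic_pair i j k l $ x = generic_pair i j k l $ y \<longleftrightarrow>
      x = y \<or> {x, y} \<subseteq> {i, j} \<or> {x, y} \<subseteq> {k, l}"
    and "generic_pair i j k l $ x \<noteq> 0"
  using assms generic_value_neq generic_value_eq_iff
  by (auto simp: generic_pair_def split: if_splits)

lemma generic_coincidence_nth_eq_iff:
  "generic_coincidence S $ x = generic_coincidence S $ y \<longleftrightarrow> x = y \<or> {x, y} \<subseteq> S"
  "generic_coincidence S $ x \<noteq> 0"
  using generic_value_neq generic_value_eq_iff by (auto simp: generic_coincidence_def)

lemma generic_hyp_mem: "generic_hyp i \<in> coord_hyperplane i"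
  by (simp add: generic_hyp_def coord_hyperplane_def)

lemma generic_pair_mem: "distinct [i, j, k, l] \<Longrightarrow> generic_pair i j k l \<in> pair_plane i j k l"
  by (auto simp: generic_pair_def pair_plane_def)

lemma generic_coincidence_mem: "generic_coincidence S \<in> coincidence_plane S"
  by (simp add: generic_coincidence_def coincidence_plane_def)

lemma generic_hyp_membership:
  "generic_hyp i \<in> coord_hyperplane i' \<longleftrightarrow> i' = i"
  "i' \<noteq> j' \<Longrightarrow> generic_hyp i \<notin> pair_plane i' j' k' l'"
  "card S' = 3 \<Longrightarrow> generic_hyp i \<notin> coincidence_plane S'"
  by (auto simp: coord_hyperplane_def pair_plane_def coincidence_plane_def card_3_iff
      generic_hyp_nth_eq_iff)

lemma generic_pair_membership:
  assumes "distinct [i, j, k, l]"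
  shows "generic_pair i j k l \<notin> coord_hyperplane i'"
    and "distinct [i', j', k', l'] \<Longrightarrow> generic_pair i j k l \<in> pair_plane i' j' k' l' \<Longrightarrow>
      {{i', j'}, {k', l'}} = {{i, j}, {k, l}}"
    and "card S' = 3 \<Longrightarrow> generic_pair i j k l \<notin> coincidence_plane S'"
  using assms
  by (auto simp: coord_hyperplane_def pair_plane_def coincidence_plane_def card_3_iff
      generic_pair_nth_eq_iff doubleton_eq_iff)

lemma generic_coincidence_membership:
  assumes "card S = 3"
  shows "generic_coincidence S \<notin> coord_hyperplane i'"
    and "distinct [i', j', k', l'] \<Longrightarrow> generic_coincidence S \<notin> pair_plane i' j' k' l'"
    and "card S' = 3 \<Longrightarrow> generic_coincidence S \<in> coincidence_plane S' \<Longrightarrow> S' = S"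
proof -
  show "generic_coincidence S \<notin> coord_hyperplane i'"
    by (simp add: coord_hyperplane_def generic_coincidence_nth_eq_iff)
  show "generic_coincidence S \<notin> pair_plane i' j' k' l'" if "distinct [i', j', k', l']"
  proof
    assume "generic_coincidence S \<in> pair_plane i' j' k' l'"
    then have "{i', j', k', l'} \<subseteq> S"
      using that by (auto simp: pair_plane_def generic_coincidence_nth_eq_iff)
    then have "card {i', j', k', l'} \<le> card S"
      by (simp add: card_mono)
    then show False
      using that assms by simp
  qed
  show "S' = S" if "card S' = 3" "generic_coincidence S \<in> coincidence_plane S'"
  proof -
    have "S' \<subseteq> S"
      using that by (auto simp: coincidence_plane_def card_3_iff generic_coincidence_nth_eq_iff)
    then show ?thesis
      using card_subset_eq[of S S'] that assms by simp
  qed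
qed

lemma Gamma_family_cases:
  assumes "Z \<in> hyperplanes \<union> planes2 \<union> planes3"
  obtains (hyperplane) i where "Z = coord_hyperplane i"
    | (pair) i j k l where "distinct [i, j, k, l]" "Z = pair_plane i j k l"
    | (coincidence) S where "card S = 3" "Z = coincidence_plane S"
  using assms unfolding hyperplanes_eq_range planes2_eq planes3_eq_image by blast

lemma Gamma_family_generic_point:
  assumes "Z \<in> hyperplanes \<union> planes2 \<union> planes3"
  obtains g where "g \<in> Z" "\<And>W. W \<in> hyperplanes \<union> planes2 \<union> planes3 \<Longrightarrow> g \<in> W \<Longrightarrow> W = Z"
  using assms
proof (cases rule: Gamma_family_cases)
  case (hyperplane i)
  show ?thesis
  proof (rule that)
    show "generic_hyp i \<in> Z"
      using hyperplane generic_hyp_mem by simp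
    show "W = Z" if "W \<in> hyperplanes \<union> planes2 \<union> planes3" "generic_hyp i \<in> W" for W
      using that(1) by (cases rule: Gamma_family_cases) (use that(2) hyperplane generic_hyp_membership in auto)
  qed
next
  case (pair i j k l)
  show ?thesis
  proof (rule that)
    show "generic_pair i j k l \<in> Z"
      using pair generic_pair_mem by simp
    show "W = Z" if "W \<in> hyperplanes \<union> planes2 \<union> planes3" "generic_pair i j k l \<in> W" for W
      using that(1)
    proof (cases rule: Gamma_family_cases)
      case (pair i' j' k' l')
      then have "{{i', j'}, {k', l'}} = {{i, j}, {k, l}}"
        using that(2) generic_pair_membership(2)[OF \<open>distinct [i, j, k, l]\<close>, of i' j' k' l']
        by simp
      then show ?thesis
        using pair_plane_cong pair \<open>Z = pair_plane i j k l\<close> by metis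
    qed (use that(2) pair generic_pair_membership in auto)
  qed
next
  case (coincidence S)
  show ?thesis
  proof (rule that)
    show "generic_coincidence S \<in> Z"
      using coincidence generic_coincidence_mem by simp
    show "W = Z" if "W \<in> hyperplanes \<union> planes2 \<union> planes3" "generic_coincidence S \<in> W" for W
      using that(1)
    proof (cases rule: Gamma_family_cases)
      case (coincidence S')
      then show ?thesis
        using that(2) generic_coincidence_membership(3)[OF \<open>card S = 3\<close>, of S']
          \<open>Z = coincidence_plane S\<close> by simp
    qed (use that(2) coincidence generic_coincidence_membership in auto)
  qed
qed

lemma Gamma_family_antichain:
  assumes "Z \<in> hyperplanes \<union> planes2 \<union> planes3" "W \<in> hyperplanes \<union> planes2 \<union> planes3" "Z \<subseteq> W"
  shows "Z = W"
proof -
  obtain g where "g \<in> Z" "\<And>W. W \<in> hyperplanes \<union> planes2 \<union> planes3 \<Longrightarrow> g \<in> W \<Longrightarrow> W = Z"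
    using Gamma_family_generic_point[OF assms(1)] by blast
  then show ?thesis
    using assms(2,3) by blast
qed

definition canonical_quadruples :: "(5 \<times> 5 \<times> 5 \<times> 5) set" where
  "canonical_quadruples = {(i, j, k, l). i < j \<and> k < l \<and> i < k \<and> j \<noteq> k \<and> j \<noteq> l}"

lemma canonical_quadruples_eq:
  "canonical_quadruples = {(0,1,2,3),(0,1,2,4),(0,1,3,4),(0,2,1,3),(0,2,1,4),(0,2,3,4),(0,3,1,2),
     (0,3,1,4),(0,3,2,4),(0,4,1,2),(0,4,1,3),(0,4,2,3),(1,2,3,4),(1,3,2,4),(1,4,2,3)}"
  (is "_ = ?R")
proof -
  have R_mem: "(i, j, k, l) \<in> ?R" if "i < j" "k < l" "i < k" "j \<noteq> k" "j \<noteq> l" for i j k l :: 5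
    using UNIV_I[of i] UNIV_I[of j] UNIV_I[of k] UNIV_I[of l] that unfolding UNIV_5
    by (elim insertE emptyE) (simp_all add: less_5_iff_idx)
  have "canonical_quadruples \<subseteq> ?R"
  proof
    fix q
    assume "q \<in> canonical_quadruples"
    then obtain i j k l where q: "q = (i, j, k, l)"
      and c: "i < j" "k < l" "i < k" "j \<noteq> k" "j \<noteq> l"
      unfolding canonical_quadruples_def by blast
    show "q \<in> ?R"
      unfolding q by (rule R_mem[OF c])
  qed
  moreover have "?R \<subseteq> canonical_quadruples"
    unfolding canonical_quadruples_def by (simp add: less_5_iff_idx)
  ultimately show ?thesis
    by (rule subset_antisym)
qed

lemma planes2_eq_image_canonical:
  "planes2 = (\<lambda>(i, j, k, l). pair_plane i j k l) ` canonical_quadruples"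
proof -
  have "\<exists>q\<in>canonical_quadruples. pair_plane i j k l = (\<lambda>(i, j, k, l). pair_plane i j k l) q"
    if "distinct [i, j, k, l]" for i j k l
  proof -
    define i1 j1 k1 l1 where "i1 = min i j" "j1 = max i j" "k1 = min k l" "l1 = max k l"
    have eq: "{{i, j}, {k, l}} = {{i1, j1}, {k1, l1}}" "{{i, j}, {k, l}} = {{k1, l1}, {i1, j1}}"
      unfolding i1_j1_k1_l1_def by (auto simp: min_def max_def)
    show ?thesis
    proof (cases "i1 < k1")
      case True
      then show ?thesis
        using that pair_plane_cong[OF eq(1)]
        by (intro bexI[of _ "(i1, j1, k1, l1)"])
          (auto simp: canonical_quadruples_def i1_j1_k1_l1_def min_def max_def)
    next
      case False
      then show ?thesis
        using that pair_plane_cong[OF eq(2)]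
        by (intro bexI[of _ "(k1, l1, i1, j1)"])
          (auto simp: canonical_quadruples_def i1_j1_k1_l1_def min_def max_def)
    qed
  qed
  moreover have "distinct [i, j, k, l]" if "(i, j, k, l) \<in> canonical_quadruples" for i j k l
    using that by (auto simp: canonical_quadruples_def)
  ultimately show ?thesis
    unfolding planes2_eq by fastforce
qed

lemma inj_on_pair_plane_canonical:
  "inj_on (\<lambda>(i, j, k, l). pair_plane i j k l) canonical_quadruples"
proof (rule inj_onI)
  fix q q'
  assume q: "q \<in> canonical_quadruples" "q' \<in> canonical_quadruples"
    and eq: "(\<lambda>(i, j, k, l). pair_plane i j k l) q = (\<lambda>(i, j, k, l). pair_plane i j k l) q'"
  obtain i j k l i' j' k' l' where q_eq: "q = (i, j, k, l)" "q' = (i', j', k', l')"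
    by (metis prod_cases4)
  have distinct: "distinct [i, j, k, l]" "distinct [i', j', k', l']"
    using q unfolding q_eq by (auto simp: canonical_quadruples_def)
  have "generic_pair i j k l \<in> pair_plane i' j' k' l'"
    using generic_pair_mem[OF distinct(1)] eq unfolding q_eq by simp
  then have "{{i', j'}, {k', l'}} = {{i, j}, {k, l}}"
    by (rule generic_pair_membership(2)[OF distinct])
  then show "q = q'"
    using q unfolding q_eq by (auto simp: canonical_quadruples_def doubleton_eq_iff)
qed

lemma card_hyperplanes: "card hyperplanes = 5"
proof -
  have "inj coord_hyperplane"
    by (rule injI) (metis generic_hyp_mem generic_hyp_membership(1))
  then show ?thesis
    unfolding hyperplanes_eq_range by (simp add: card_image)
qed

lemma card_planes2: "card planes2 = 15"
  unfolding planes2_eq_image_canonical card_image[OF inj_on_pair_plane_canonical]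
  by (simp add: canonical_quadruples_eq)

lemma card_planes3: "card planes3 = 10"
proof -
  have "inj_on coincidence_plane {S. card S = 3}"
    by (rule inj_onI) (metis generic_coincidence_mem generic_coincidence_membership(3) mem_Collect_eq)
  moreover have "card {S :: 5 set. card S = 3} = 10"
    using n_subsets[of "UNIV :: 5 set" 3] by (simp add: numeral_eq_Suc)
  ultimately show ?thesis
    unfolding planes3_eq_image by (simp add: card_image)
qed

lemma finite_Gamma_family: "finite (hyperplanes \<union> planes2 \<union> planes3)"
  unfolding hyperplanes_eq_range planes2_eq_image_canonical planes3_eq_image by simp

lemma Gamma_families_disjoint:
  "hyperplanes \<inter> planes2 = {}" "hyperplanes \<inter> planes3 = {}" "planes2 \<inter> planes3 = {}"
proof safe
  fix Z
  assume "Z \<in> hyperplanes" "Z \<in> planes2"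
  then obtain i' i j k l where "Z = coord_hyperplane i'" "distinct [i, j, k, l]" "Z = pair_plane i j k l"
    unfolding hyperplanes_eq_range planes2_eq by blast
  then show "Z \<in> {}"
    using generic_pair_mem generic_pair_membership(1) by metis
next
  fix Z
  assume "Z \<in> hyperplanes" "Z \<in> planes3"
  then obtain i' S where "Z = coord_hyperplane i'" "card S = 3" "Z = coincidence_plane S"
    unfolding hyperplanes_eq_range planes3_eq_image by blast
  then show "Z \<in> {}"
    using generic_coincidence_mem generic_coincidence_membership(1) by metis
next
  fix Z
  assume "Z \<in> planes2" "Z \<in> planes3"
  then obtain i j k l S where "distinct [i, j, k, l]" "Z = pair_plane i j k l"
    "card S = 3" "Z = coincidence_plane S"
    unfolding planes2_eq planes3_eq_image by blast
  then show "Z \<in> {}"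
    using generic_coincidence_mem generic_coincidence_membership(2) by metis
qed

lemma card_Gamma_family: "card (hyperplanes \<union> planes2 \<union> planes3) = 30"
proof -
  have "finite hyperplanes" "finite planes2" "finite planes3"
    using finite_Gamma_family by auto
  then show ?thesis
    using Gamma_families_disjoint card_hyperplanes card_planes2 card_planes3
    by (simp add: card_Un_disjoint Int_Un_distrib2)
qed

lemma irr_components_Gamma: "irr_components Gamma = hyperplanes \<union> planes2 \<union> planes3"
proof -
  have irreducible: "irreducible_closed Z" if "Z \<in> hyperplanes \<union> planes2 \<union> planes3" for Z
    using that by (cases rule: Gamma_family_cases)
      (simp_all add: irreducible_coord_hyperplane irreducible_pair_plane irreducible_coincidence_plane)
  show ?thesis
    unfolding Gamma_eq_Union
    by (rule irr_components_Union[OF finite_Gamma_family irreducible Gamma_family_antichain])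
qed

section \<open>The images under Phi\<close>

lemma esym_5: "esym 5 a = (\<Prod>k\<in>UNIV. a$k)"
proof -
  have "card S = 5 \<longleftrightarrow> S = UNIV" for S :: "5 set"
    using card_subset_eq[of UNIV S] by auto
  then have "{S :: 5 set. card S = 5} = {UNIV}"
    by auto
  then show ?thesis
    unfolding esym_def by simp
qed

lemma Phi_nth:
  "Phi a $ 0 = esym 4 a ^ 2 - 4 * esym 3 a * esym 5 a"
  "Phi a $ 1 = esym 1 a * esym 5 a ^ 3" "Phi a $ 2 = esym 4 a * esym 5 a ^ 4"
  "Phi a $ 3 = esym 2 a * esym 5 a ^ 6" "Phi a $ 4 = esym 5 a ^ 8"
  by (simp_all add: Phi_def)

lemma Phi_coord_hyperplane_wequiv_Qpt:
  assumes "a \<in> Phi_dom" "a $ i = 0"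
  shows "wequiv Qpt (Phi a)"
proof -
  have e5: "esym 5 a = 0"
    using assms(2) by (auto simp: esym_5)
  then have "esym 4 a ^ 2 \<noteq> 0"
    using assms(1) by (simp add: Phi_dom_def vec_5_eq_iff Phi_nth)
  moreover have "Qpt \<noteq> 0"
    by (simp add: vec_5_eq_iff Qpt_def)
  moreover have "Phi a = (\<chi> k. (esym 4 a ^ 2) ^ (idx k + 1) * Qpt $ k)"
    by (simp add: vec_5_eq_iff Phi_nth e5 Qpt_def)
  ultimately show ?thesis
    unfolding wequiv_def by blast
qed

lemma esym_4_coord_hyperplane_point: "esym 4 (\<chi> x. if x = i then 0 else 1) = 1"
proof -
  let ?a = "(\<chi> x. if x = i then 0 else 1) :: pt"
  have "card (UNIV - {i} :: 5 set) = 4"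
    by (simp add: card_Diff_singleton)
  have "(\<Prod>x\<in>S. ?a $ x) = of_bool (S = UNIV - {i})" if "card S = 4" for S :: "5 set"
  proof (cases "i \<in> S")
    case True
    then show ?thesis
      by (auto intro: prod_zero)
  next
    case False
    then have "S = UNIV - {i}"
      using card_subset_eq[of "UNIV - {i}" S] that \<open>card (UNIV - {i}) = 4\<close> by auto
    then show ?thesis
      by simp
  qed
  then have "esym 4 ?a = (\<Sum>S\<in>{S. card S = 4}. of_bool (S = UNIV - {i}))"
    unfolding esym_def by (intro sum.cong) auto
  also have "\<dots> = 1"
    using \<open>card (UNIV - {i}) = 4\<close> by (simp add: of_bool_def sum.delta)
  finally show ?thesis .
qed

lemma Phi_dom_coord_hyperplane_nonempty: "Phi_dom \<inter> coord_hyperplane i \<noteq> {}"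
proof -
  let ?a = "(\<chi> x. if x = i then 0 else 1) :: pt"
  have "esym 5 ?a = 0"
    by (auto simp: esym_5)
  then have "Phi ?a $ 0 = 1"
    by (simp add: Phi_nth esym_4_coord_hyperplane_point)
  then have "Phi ?a \<noteq> 0"
    by auto
  moreover have "?a $ (if i = 0 then 1 else 0) \<noteq> 0"
    by simp
  then have "?a \<noteq> 0"
    by (metis zero_index)
  ultimately have "?a \<in> Phi_dom \<inter> coord_hyperplane i"
    by (simp add: Phi_dom_def coord_hyperplane_def)
  then show ?thesis
    by blast
qed

definition permute_coords :: "(5 \<Rightarrow> 5) \<Rightarrow> pt \<Rightarrow> pt" where
  "permute_coords s a = (\<chi> t. a $ s t)"

lemma permute_coords_nth [simp]: "permute_coords s a $ t = a $ s t"
  by (simp add: permute_coords_def)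

lemma esym_permute_coords:
  assumes "bij s"
  shows "esym k (permute_coords s a) = esym k a"
proof -
  have inj_s: "inj s"
    using assms bij_is_inj by blast
  have image_sets: "image s ` {S. card S = k} = {S. card S = k}"
  proof
    show "image s ` {S. card S = k} \<subseteq> {S. card S = k}"
      using inj_s by (auto simp: card_image inj_on_subset)
    show "{S. card S = k} \<subseteq> image s ` {S. card S = k}"
    proof
      fix T :: "5 set"
      assume "T \<in> {S. card S = k}"
      moreover have "T = s ` (inv s ` T)"
        using assms by (simp add: image_image bij_is_surj surj_f_inv_f)
      moreover have "inj (inv s)"
        using bij_imp_bij_inv[OF assms] bij_is_inj by blast
      ultimately show "T \<in> image s ` {S. card S = k}"
        by (metis (mono_tags, lifting) card_image inj_on_subset mem_Collect_eq subset_UNIV image_eqI)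
    qed
  qed
  have "esym k (permute_coords s a) = (\<Sum>S\<in>{S. card S = k}. \<Prod>x\<in>s ` S. a $ x)"
    unfolding esym_def
    by (intro sum.cong refl) (simp add: prod.reindex[OF inj_on_subset[OF inj_s subset_UNIV]])
  also have "\<dots> = (\<Sum>T\<in>image s ` {S. card S = k}. \<Prod>x\<in>T. a $ x)"
    by (rule sum.reindex[symmetric, unfolded comp_def]) (use inj_s in \<open>simp add: inj_on_def inj_image_eq_iff\<close>)
  finally show ?thesis
    unfolding image_sets esym_def .
qed

lemma Phi_permute_coords: "bij s \<Longrightarrow> Phi (permute_coords s a) = Phi a"
  unfolding Phi_def by (simp add: esym_permute_coords)

lemma Phi_image_permute_coords_vimage:
  assumes "bij s"
  shows "Phi ` (Phi_dom \<inter> permute_coords s -` P) = Phi ` (Phi_dom \<inter> P)"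
proof -
  have "bij (permute_coords s)"
    by (rule o_bij[of "permute_coords (inv s)"])
      (use assms in \<open>simp_all add: fun_eq_iff vec_eq_iff bij_is_surj bij_is_inj surj_f_inv_f\<close>)
  moreover have "permute_coords s a = 0 \<longleftrightarrow> a = 0" for a
    using assms by (simp add: vec_eq_iff) (metis bij_is_surj surjD)
  then have "Phi_dom \<inter> permute_coords s -` P = permute_coords s -` (Phi_dom \<inter> P)"
    using Phi_permute_coords[OF assms] by (auto simp: Phi_dom_def)
  ultimately have "permute_coords s ` (Phi_dom \<inter> permute_coords s -` P) = Phi_dom \<inter> P"
    by (metis bij_is_surj image_vimage_eq inf_top.right_neutral)
  then have "Phi ` (Phi_dom \<inter> P) = Phi ` permute_coords s ` (Phi_dom \<inter> permute_coords s -` P)"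
    by simp
  also have "\<dots> = Phi ` (Phi_dom \<inter> permute_coords s -` P)"
    using Phi_permute_coords[OF assms] by (simp add: image_image)
  finally show ?thesis ..
qed

lemma bij_nth_idx:
  fixes xs :: "5 list"
  assumes "distinct xs" "length xs = 5"
  shows "bij (\<lambda>t. xs ! idx t)"
proof -
  have "inj (\<lambda>t. xs ! idx t)"
    using assms idx_less_5 by (intro injI) (metis idx_eq_iff nth_eq_iff_index_eq)
  then show ?thesis
    using finite_UNIV_inj_surj[of "\<lambda>t. xs ! idx t"] by (simp add: bij_def)
qed

lemma ex_not_in_list:
  assumes "length (xs :: 5 list) < 5"
  obtains m where "m \<notin> set xs"
proof -
  have "set xs \<noteq> UNIV"
    using card_length[of xs] assms by auto
  then show ?thesis
    using that by blast
qed

lemma Phi_image_pair_plane: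
  assumes "distinct [i, j, k, l]"
  shows "Phi ` (Phi_dom \<inter> pair_plane i j k l) = Phi ` (Phi_dom \<inter> pair_plane 1 2 3 4)"
proof -
  obtain m where "m \<notin> set [i, j, k, l]"
    using ex_not_in_list[of "[i, j, k, l]"] by auto
  then have "bij (\<lambda>t. [m, i, j, k, l] ! idx t)"
    using assms by (intro bij_nth_idx) auto
  moreover have "pair_plane i j k l = permute_coords (\<lambda>t. [m, i, j, k, l] ! idx t) -` pair_plane 1 2 3 4"
    by (simp add: pair_plane_def)
  ultimately show ?thesis
    by (simp add: Phi_image_permute_coords_vimage)
qed

lemma Phi_image_coincidence_plane:
  assumes "card S = 3"
  shows "Phi ` (Phi_dom \<inter> coincidence_plane S) = Phi ` (Phi_dom \<inter> coincidence_plane {1, 2, 3})"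
proof -
  obtain i j k where S: "S = {i, j, k}" "distinct [i, j, k]"
    using assms by (auto simp: card_3_iff)
  obtain m where "m \<notin> set [i, j, k]"
    using ex_not_in_list[of "[i, j, k]"] by auto
  moreover obtain m' where "m' \<notin> set [m, i, j, k]"
    using ex_not_in_list[of "[m, i, j, k]"] by auto
  ultimately have "bij (\<lambda>t. [m, i, j, k, m'] ! idx t)"
    using S by (intro bij_nth_idx) auto
  moreover have "coincidence_plane S =
      permute_coords (\<lambda>t. [m, i, j, k, m'] ! idx t) -` coincidence_plane {1, 2, 3}"
    by (simp add: S coincidence_plane_triple)
  ultimately show ?thesis
    by (simp add: Phi_image_permute_coords_vimage)
qed

lemma Sylvester_aabbcc_eq: "{coeffs [a, b, b, c, c] | a b c. True} = pair_plane 1 2 3 4"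
proof
  show "pair_plane 1 2 3 4 \<subseteq> {coeffs [a, b, b, c, c] | a b c. True}"
  proof
    fix x
    assume "x \<in> pair_plane 1 2 3 4"
    then have "x = coeffs [x$0, x$1, x$1, x$3, x$3]"
      by (simp add: vec_5_eq_iff coeffs_def pair_plane_def)
    then show "x \<in> {coeffs [a, b, b, c, c] | a b c. True}"
      by blast
  qed
qed (auto simp: coeffs_def pair_plane_def)

lemma Sylvester_abbbc_eq: "{coeffs [a, b, b, b, c] | a b c. True} = coincidence_plane {1, 2, 3}"
proof
  show "coincidence_plane {1, 2, 3} \<subseteq> {coeffs [a, b, b, b, c] | a b c. True}"
  proof
    fix x
    assume "x \<in> coincidence_plane {1, 2, 3}"
    then have "x = coeffs [x$0, x$1, x$1, x$1, x$4]"
      by (simp add: vec_5_eq_iff coeffs_def coincidence_plane_triple)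
    then show "x \<in> {coeffs [a, b, b, b, c] | a b c. True}"
      by blast
  qed
qed (auto simp: coeffs_def coincidence_plane_triple)

theorem mainTheorem2:
  shows "irr_components Gamma = hyperplanes \<union> planes2 \<union> planes3
    \<and> card (irr_components Gamma) = 30
    \<and> (\<forall>H \<in> hyperplanes. Phi ` (Phi_dom \<inter> H) \<noteq> {} \<and>
          (\<forall>a \<in> Phi_dom \<inter> H. wequiv Qpt (Phi a)))
    \<and> (\<forall>P \<in> planes2. zariski_closure (wcone (Phi ` (Phi_dom \<inter> P))) = S1)
    \<and> (\<forall>P \<in> planes3. zariski_closure (wcone (Phi ` (Phi_dom \<inter> P))) = S2)"
proof (intro conjI ballI)
  show "irr_components Gamma = hyperplanes \<union> planes2 \<union> planes3"
    by (rule irr_components_Gamma)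
  then show "card (irr_components Gamma) = 30"
    by (simp add: card_Gamma_family)
next
  fix H
  assume "H \<in> hyperplanes"
  then obtain i where H: "H = coord_hyperplane i"
    unfolding hyperplanes_eq_range by blast
  show "Phi ` (Phi_dom \<inter> H) \<noteq> {}"
    using Phi_dom_coord_hyperplane_nonempty H by blast
  show "wequiv Qpt (Phi a)" if "a \<in> Phi_dom \<inter> H" for a
    using that Phi_coord_hyperplane_wequiv_Qpt by (auto simp: H coord_hyperplane_def)
next
  fix P
  assume "P \<in> planes2"
  then obtain i j k l where "distinct [i, j, k, l]" "P = pair_plane i j k l"
    unfolding planes2_eq by blast
  then have "Phi ` (Phi_dom \<inter> P) = Phi ` (Phi_dom \<inter> pair_plane 1 2 3 4)"
    using Phi_image_pair_plane by blast
  then show "zariski_closure (wcone (Phi ` (Phi_dom \<inter> P))) = S1"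
    unfolding S1_def Sylvester_aabbcc_eq by (simp only:)
next
  fix P
  assume "P \<in> planes3"
  then obtain S where "card S = 3" "P = coincidence_plane S"
    unfolding planes3_eq_image by blast
  then have "Phi ` (Phi_dom \<inter> P) = Phi ` (Phi_dom \<inter> coincidence_plane {1, 2, 3})"
    using Phi_image_coincidence_plane by blast
  then show "zariski_closure (wcone (Phi ` (Phi_dom \<inter> P))) = S2"
    unfolding S2_def Sylvester_abbbc_eq by (simp only:)
qed

end
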